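(* Let $H$ be a complex separable Hilbert space and let $S,T,X\in B(H)$ with $S$ and $T$ positive. Then $$\|SX-XT\|_2\le\|X\|_2\left(\|S\|_2^2+\|T\|_2^2\right)^{1/2}.$$
   Context: $\|\cdot\|_2$ denotes the Hilbert–Schmidt norm $\|Z\|_2=(\operatorname{tr}(Z^*Z))^{1/2}$ (possibly $+\infty$). *)

theory Defs
  imports "HOL-Analysis.Analysis"
begin

text \<open>Model of a complex separable Hilbert space: l2(I) for a countable index type I
  (finite I gives C^n, infinite I gives l2(N)); every complex separable Hilbert space is
  unitarily isomorphic to one of these, and all notions below are unitarily invariant.\<close>

definition l2 :: "('i \<Rightarrow> complex) set" where
  "l2 = {x. (\<lambda>i. (cmod (x i))\<^sup>2) summable_on UNIV}"

definition l2_inner :: "('i \<Rightarrow> complex) \<Rightarrow> ('i \<Rightarrow> complex) \<Rightarrow> complex" where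
  "l2_inner x y = (\<Sum>\<^sub>\<infinity>i. cnj (x i) * y i)"

definition l2_norm :: "('i \<Rightarrow> complex) \<Rightarrow> real" where
  "l2_norm x = sqrt (\<Sum>\<^sub>\<infinity>i. (cmod (x i))\<^sup>2)"

text \<open>Bounded (complex-linear) operators on l2, i.e. elements of B(H).
  Only the values on l2 matter.\<close>
definition bounded_op :: "(('i \<Rightarrow> complex) \<Rightarrow> ('i \<Rightarrow> complex)) \<Rightarrow> bool" where
  "bounded_op A \<longleftrightarrow>
     (\<forall>x\<in>l2. A x \<in> l2) \<and>
     (\<forall>x\<in>l2. \<forall>y\<in>l2. A (\<lambda>i. x i + y i) = (\<lambda>i. A x i + A y i)) \<and>
     (\<forall>x\<in>l2. \<forall>c::complex. A (\<lambda>i. c * x i) = (\<lambda>i. c * A x i)) \<and>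
     (\<exists>K. \<forall>x\<in>l2. l2_norm (A x) \<le> K * l2_norm x)"

definition positive_op :: "(('i \<Rightarrow> complex) \<Rightarrow> ('i \<Rightarrow> complex)) \<Rightarrow> bool" where
  "positive_op A \<longleftrightarrow> (\<forall>x\<in>l2. Im (l2_inner x (A x)) = 0 \<and> Re (l2_inner x (A x)) \<ge> 0)"

definition basis_vec :: "'i \<Rightarrow> ('i \<Rightarrow> complex)" where
  "basis_vec j = (\<lambda>i. if i = j then 1 else 0)"

text \<open>tr(Z^* Z) computed in the standard orthonormal basis: sum_j ||Z e_j||^2, in [0,\<infinity>].\<close>
definition hs_sq :: "(('i \<Rightarrow> complex) \<Rightarrow> ('i \<Rightarrow> complex)) \<Rightarrow> ennreal" where
  "hs_sq Z = (\<Sum>\<^sub>\<infinity>j. \<Sum>\<^sub>\<infinity>i. ennreal ((cmod (Z (basis_vec j) i))\<^sup>2))"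

definition esqrt :: "ennreal \<Rightarrow> ennreal" where
  "esqrt a = (if a = \<infinity> then \<infinity> else ennreal (sqrt (enn2real a)))"

definition hs_norm :: "(('i \<Rightarrow> complex) \<Rightarrow> ('i \<Rightarrow> complex)) \<Rightarrow> ennreal" where
  "hs_norm Z = esqrt (hs_sq Z)"

end

(* Let a = ||S||_2, b = ||T||_2 and c = max a b / 2.  The operator norm is dominated by the
   Hilbert-Schmidt norm, so 0 <= S <= a and 0 <= T <= b; hence the Hermitian operators S - c and
   T - c have operator norm at most c.  Since SX - XT = (S - c) X - X (T - c), and composing with
   a Hermitian operator of norm at most c on either side scales ||.||_2 by at most c,
   ||SX - XT||_2^2 <= 2 c^2 ||X||_2^2 + 2 c^2 ||X||_2^2 = (max a b)^2 ||X||_2^2 <= (a^2 + b^2) ||X||_2^2. *)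

theory Submission
  imports Defs
begin

lemma infsum_ennreal_of_real:
  fixes f :: "'a \<Rightarrow> real"
  assumes "f summable_on A" and "\<And>x. x \<in> A \<Longrightarrow> f x \<ge> 0"
  shows "(\<Sum>\<^sub>\<infinity>x\<in>A. ennreal (f x)) = ennreal (\<Sum>\<^sub>\<infinity>x\<in>A. f x)"
proof -
  have "infsum (ennreal \<circ> f) A = ennreal (infsum f A)"
    by (rule infsum_comm_additive_general) (use assms in \<open>auto simp: sum_ennreal subset_iff\<close>)
  then show ?thesis by (simp add: o_def)
qed

lemma summable_on_if_infsum_ennreal_finite:
  fixes f :: "'a \<Rightarrow> real"
  assumes fin: "(\<Sum>\<^sub>\<infinity>x\<in>A. ennreal (f x)) < top" and nonneg: "\<And>x. x \<in> A \<Longrightarrow> f x \<ge> 0"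
  shows "f summable_on A"
proof (rule nonneg_bdd_above_summable_on)
  show "bdd_above (sum f ` {F. F \<subseteq> A \<and> finite F})"
  proof (rule bdd_aboveI2)
    fix F assume F: "F \<in> {F. F \<subseteq> A \<and> finite F}"
    then have "ennreal (sum f F) = (\<Sum>\<^sub>\<infinity>x\<in>F. ennreal (f x))"
      using nonneg by (auto simp: sum_ennreal subset_iff)
    also have "\<dots> \<le> (\<Sum>\<^sub>\<infinity>x\<in>A. ennreal (f x))"
      using F by (intro infsum_mono_neutral) (auto simp: nonneg_summable_on_complete)
    finally have "ennreal (sum f F) \<le> (\<Sum>\<^sub>\<infinity>x\<in>A. ennreal (f x))" .
    moreover have "sum f F \<ge> 0" using F nonneg by (auto intro: sum_nonneg)
    ultimately show "sum f F \<le> enn2real (\<Sum>\<^sub>\<infinity>x\<in>A. ennreal (f x))"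
      using enn2real_mono[OF _ fin] by fastforce
  qed
qed (use nonneg in auto)

lemma infsum_ennreal_cmult:
  fixes f :: "'a \<Rightarrow> ennreal"
  assumes "c < top"
  shows "(\<Sum>\<^sub>\<infinity>x\<in>A. c * f x) = c * (\<Sum>\<^sub>\<infinity>x\<in>A. f x)"
proof -
  have "(f has_sum (\<Sum>\<^sub>\<infinity>x\<in>A. f x)) A" by (rule has_sum_infsum) (simp add: nonneg_summable_on_complete)
  then have "((\<lambda>F. c * sum f F) \<longlongrightarrow> c * (\<Sum>\<^sub>\<infinity>x\<in>A. f x)) (finite_subsets_at_top A)"
    unfolding has_sum_def by (rule ennreal_tendsto_cmult[OF assms])
  then have "((\<lambda>x. c * f x) has_sum c * (\<Sum>\<^sub>\<infinity>x\<in>A. f x)) A"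
    unfolding has_sum_def by (simp add: sum_distrib_left)
  then show ?thesis by (rule infsumI)
qed

lemma sum_le_infsum_ennreal:
  fixes f :: "'a \<Rightarrow> ennreal"
  assumes "finite F" and "F \<subseteq> A"
  shows "sum f F \<le> (\<Sum>\<^sub>\<infinity>x\<in>A. f x)"
proof -
  have "sum f F = (\<Sum>\<^sub>\<infinity>x\<in>F. f x)" using assms(1) by simp
  also have "\<dots> \<le> (\<Sum>\<^sub>\<infinity>x\<in>A. f x)"
    using assms(2) by (intro infsum_mono_neutral) (auto simp: nonneg_summable_on_complete)
  finally show ?thesis .
qed

lemma infsum_swap_ennreal_le:
  fixes f :: "'a \<Rightarrow> 'b \<Rightarrow> ennreal"
  shows "(\<Sum>\<^sub>\<infinity>x\<in>A. \<Sum>\<^sub>\<infinity>y\<in>B. f x y) \<le> (\<Sum>\<^sub>\<infinity>y\<in>B. \<Sum>\<^sub>\<infinity>x\<in>A. f x y)"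
proof (rule infsum_le_finite_sums)
  fix F assume F: "finite F" "F \<subseteq> A"
  have "(\<Sum>x\<in>F. \<Sum>\<^sub>\<infinity>y\<in>B. f x y) = (\<Sum>\<^sub>\<infinity>y\<in>B. \<Sum>x\<in>F. f x y)"
    using F(1) by (induction F rule: finite_induct) (simp_all add: infsum_add nonneg_summable_on_complete)
  also have "\<dots> \<le> (\<Sum>\<^sub>\<infinity>y\<in>B. \<Sum>\<^sub>\<infinity>x\<in>A. f x y)"
    using F by (intro infsum_mono sum_le_infsum_ennreal) (auto simp: nonneg_summable_on_complete)
  finally show "(\<Sum>x\<in>F. \<Sum>\<^sub>\<infinity>y\<in>B. f x y) \<le> \<dots>" .
qed (simp add: nonneg_summable_on_complete)

lemma infsum_swap_ennreal:
  fixes f :: "'a \<Rightarrow> 'b \<Rightarrow> ennreal"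
  shows "(\<Sum>\<^sub>\<infinity>x\<in>A. \<Sum>\<^sub>\<infinity>y\<in>B. f x y) = (\<Sum>\<^sub>\<infinity>y\<in>B. \<Sum>\<^sub>\<infinity>x\<in>A. f x y)"
  by (rule antisym[OF infsum_swap_ennreal_le infsum_swap_ennreal_le])

lemma l2_norm_power2: "(l2_norm x)\<^sup>2 = (\<Sum>\<^sub>\<infinity>i. (cmod (x i))\<^sup>2)"
  unfolding l2_norm_def by (rule real_sqrt_pow2) (rule infsum_nonneg, simp)

lemma l2_norm_nonneg [simp]: "l2_norm x \<ge> 0"
  by (simp add: l2_norm_def infsum_nonneg)

lemma l2_summable: "x \<in> l2 \<Longrightarrow> (\<lambda>i. (cmod (x i))\<^sup>2) summable_on UNIV"
  by (simp add: l2_def)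

lemma l2_comparison: "y \<in> l2 \<Longrightarrow> (\<And>i. cmod (x i) \<le> cmod (y i)) \<Longrightarrow> x \<in> l2"
  unfolding l2_def mem_Collect_eq by (erule summable_on_comparison_test) (auto intro: power_mono)

lemma sq_norm_add_le:
  fixes a b :: "'a::real_normed_vector"
  shows "(norm (a + b))\<^sup>2 \<le> 2 * (norm a)\<^sup>2 + 2 * (norm b)\<^sup>2"
proof -
  have "(norm (a + b))\<^sup>2 \<le> (norm a + norm b)\<^sup>2"
    by (simp add: norm_triangle_ineq power_mono)
  also have "\<dots> \<le> 2 * (norm a)\<^sup>2 + 2 * (norm b)\<^sup>2"
    using sum_squares_bound[of "norm a" "norm b"] by (simp add: power2_sum)
  finally show ?thesis .
qed

lemma l2_lincomb:
  assumes "x \<in> l2" and "y \<in> l2"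
  shows "(\<lambda>i. a * x i + b * y i) \<in> l2"
proof -
  have "(\<lambda>i. 2 * (cmod a)\<^sup>2 * (cmod (x i))\<^sup>2 + 2 * (cmod b)\<^sup>2 * (cmod (y i))\<^sup>2) summable_on UNIV"
    using assms by (intro summable_on_add summable_on_cmult_right l2_summable)
  moreover have "(cmod (a * x i + b * y i))\<^sup>2
      \<le> 2 * (cmod a)\<^sup>2 * (cmod (x i))\<^sup>2 + 2 * (cmod b)\<^sup>2 * (cmod (y i))\<^sup>2" for i
    using sq_norm_add_le[of "a * x i" "b * y i"] by (simp add: norm_mult power_mult_distrib mult.assoc)
  ultimately have "(\<lambda>i. (cmod (a * x i + b * y i))\<^sup>2) summable_on UNIV"
    by (rule summable_on_comparison_test) simp
  then show ?thesis by (simp add: l2_def)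
qed

lemma l2_add: "x \<in> l2 \<Longrightarrow> y \<in> l2 \<Longrightarrow> (\<lambda>i. x i + y i) \<in> l2"
  using l2_lincomb[of x y 1 1] by simp

lemma l2_diff: "x \<in> l2 \<Longrightarrow> y \<in> l2 \<Longrightarrow> (\<lambda>i. x i - y i) \<in> l2"
  using l2_lincomb[of x y 1 "-1"] by simp

lemma l2_scale: "x \<in> l2 \<Longrightarrow> (\<lambda>i. c * x i) \<in> l2"
  using l2_lincomb[of x x c 0] by simp

lemma l2_zero: "(\<lambda>i. 0) \<in> l2"
  by (simp add: l2_def)

lemma basis_vec_in_l2: "basis_vec j \<in> l2"
  unfolding l2_def mem_Collect_eq
  by (rule finite_nonzero_values_imp_summable_on) (rule finite_subset[of _ "{j}"], auto simp: basis_vec_def)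

lemma norm_coord_le_l2_norm:
  assumes "x \<in> l2"
  shows "cmod (x i) \<le> l2_norm x"
proof -
  have "(cmod (x i))\<^sup>2 \<le> (\<Sum>\<^sub>\<infinity>j. (cmod (x j))\<^sup>2)"
    using finite_sum_le_infsum[of "\<lambda>j. (cmod (x j))\<^sup>2" UNIV "{i}"] assms
    by (simp add: l2_summable)
  then show ?thesis unfolding l2_norm_def by (simp add: real_le_rsqrt)
qed

lemma l2_eq_0_if_norm_0:
  assumes "x \<in> l2" and "l2_norm x \<le> 0"
  shows "x = (\<lambda>i. 0)"
proof
  fix i
  have "cmod (x i) \<le> 0" using norm_coord_le_l2_norm[OF assms(1)] assms(2) by (rule order_trans)
  then show "x i = 0" by simp
qed

lemma l2_norm_scale: "l2_norm (\<lambda>i. c * x i) = cmod c * l2_norm x"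
  unfolding l2_norm_def
  by (simp add: norm_mult power_mult_distrib infsum_cmult_right' real_sqrt_mult)

lemma l2_parallelogram:
  assumes u: "u \<in> l2" and v: "v \<in> l2"
  shows "(l2_norm (\<lambda>i. u i + v i))\<^sup>2 + (l2_norm (\<lambda>i. u i - v i))\<^sup>2
           = 2 * (l2_norm u)\<^sup>2 + 2 * (l2_norm v)\<^sup>2"
proof -
  have pointwise: "(cmod (a + b))\<^sup>2 + (cmod (a - b))\<^sup>2 = 2 * (cmod a)\<^sup>2 + 2 * (cmod b)\<^sup>2"
    for a b :: complex
    unfolding cmod_power2 by (simp add: power2_eq_square algebra_simps)
  have "(l2_norm (\<lambda>i. u i + v i))\<^sup>2 + (l2_norm (\<lambda>i. u i - v i))\<^sup>2
      = (\<Sum>\<^sub>\<infinity>i. (cmod (u i + v i))\<^sup>2 + (cmod (u i - v i))\<^sup>2)"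
    unfolding l2_norm_power2
    by (rule infsum_add[symmetric]) (intro l2_summable l2_add l2_diff u v)+
  also have "\<dots> = (\<Sum>\<^sub>\<infinity>i. 2 * (cmod (u i))\<^sup>2 + 2 * (cmod (v i))\<^sup>2)"
    by (simp only: pointwise)
  also have "\<dots> = 2 * (l2_norm u)\<^sup>2 + 2 * (l2_norm v)\<^sup>2"
    unfolding l2_norm_power2 using l2_summable[OF u] l2_summable[OF v]
    by (subst infsum_add) (auto intro: summable_on_cmult_right simp: infsum_cmult_right')
  finally show ?thesis .
qed

text \<open>Unlike \<^term>\<open>(l2_norm x)\<^sup>2\<close>, which is \<open>0\<close> for \<open>x \<notin> l2\<close>, this squared norm is infinite there.\<close>

definition enn_sqnorm :: "('i \<Rightarrow> complex) \<Rightarrow> ennreal" where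
  "enn_sqnorm x = (\<Sum>\<^sub>\<infinity>i. ennreal ((cmod (x i))\<^sup>2))"

lemma enn_sqnorm_l2: "x \<in> l2 \<Longrightarrow> enn_sqnorm x = ennreal ((l2_norm x)\<^sup>2)"
  unfolding enn_sqnorm_def l2_norm_power2 by (rule infsum_ennreal_of_real) (auto simp: l2_def)

lemma l2_if_enn_sqnorm_finite: "enn_sqnorm x < top \<Longrightarrow> x \<in> l2"
  unfolding l2_def enn_sqnorm_def mem_Collect_eq
  by (rule summable_on_if_infsum_ennreal_finite) auto

lemma enn_sqnorm_diff_le: "enn_sqnorm (\<lambda>i. x i - y i) \<le> 2 * enn_sqnorm x + 2 * enn_sqnorm y"
proof -
  have "ennreal ((cmod (x i - y i))\<^sup>2) \<le> 2 * ennreal ((cmod (x i))\<^sup>2) + 2 * ennreal ((cmod (y i))\<^sup>2)" for i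
  proof -
    have "ennreal ((cmod (x i - y i))\<^sup>2) \<le> ennreal (2 * (cmod (x i))\<^sup>2 + 2 * (cmod (y i))\<^sup>2)"
      using sq_norm_add_le[of "x i" "- y i"] by (intro ennreal_leI) simp
    also have "\<dots> = 2 * ennreal ((cmod (x i))\<^sup>2) + 2 * ennreal ((cmod (y i))\<^sup>2)"
      by (simp add: ennreal_plus ennreal_mult)
    finally show ?thesis .
  qed
  then have "enn_sqnorm (\<lambda>i. x i - y i)
      \<le> (\<Sum>\<^sub>\<infinity>i. 2 * ennreal ((cmod (x i))\<^sup>2) + 2 * ennreal ((cmod (y i))\<^sup>2))"
    unfolding enn_sqnorm_def by (intro infsum_mono) (auto simp: nonneg_summable_on_complete)
  also have "\<dots> = 2 * enn_sqnorm x + 2 * enn_sqnorm y"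
    by (simp add: enn_sqnorm_def infsum_add nonneg_summable_on_complete infsum_ennreal_cmult)
  finally show ?thesis .
qed

lemma enn_sqnorm_le_if_norm_le:
  assumes "u \<in> l2" and "v \<in> l2" and "l2_norm v \<le> M * l2_norm u"
  shows "enn_sqnorm v \<le> ennreal (M\<^sup>2) * enn_sqnorm u"
proof -
  have "(l2_norm v)\<^sup>2 \<le> (M * l2_norm u)\<^sup>2"
    using assms(3) by (intro power_mono) simp_all
  then show ?thesis
    using assms(1,2) by (simp add: enn_sqnorm_l2 ennreal_mult'[symmetric] power_mult_distrib ennreal_leI)
qed

lemma l2_norm_tail_tendsto_0:
  assumes y: "y \<in> l2"
  shows "((\<lambda>F. l2_norm (\<lambda>j. if j \<in> F then 0 else y j)) \<longlongrightarrow> 0) (finite_subsets_at_top UNIV)"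
proof -
  have tail: "l2_norm (\<lambda>j. if j \<in> F then 0 else y j) = sqrt ((l2_norm y)\<^sup>2 - (\<Sum>j\<in>F. (cmod (y j))\<^sup>2))"
    if "finite F" for F
  proof -
    have "(l2_norm y)\<^sup>2 = (\<Sum>\<^sub>\<infinity>j\<in>F \<union> -F. (cmod (y j))\<^sup>2)"
      by (simp add: l2_norm_power2)
    also have "\<dots> = (\<Sum>\<^sub>\<infinity>j\<in>F. (cmod (y j))\<^sup>2) + (\<Sum>\<^sub>\<infinity>j\<in>-F. (cmod (y j))\<^sup>2)"
      by (rule infsum_Un_disjoint) (auto intro: summable_on_subset_banach[OF l2_summable[OF y]])
    finally have "(l2_norm y)\<^sup>2 = \<dots>" .
    moreover have "(\<Sum>\<^sub>\<infinity>j\<in>-F. (cmod (y j))\<^sup>2) = (l2_norm (\<lambda>j. if j \<in> F then 0 else y j))\<^sup>2"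
      unfolding l2_norm_power2 by (rule infsum_cong_neutral) auto
    ultimately show ?thesis using that by simp
  qed
  have "((\<lambda>F. \<Sum>j\<in>F. (cmod (y j))\<^sup>2) \<longlongrightarrow> (l2_norm y)\<^sup>2) (finite_subsets_at_top UNIV)"
    using has_sum_infsum[OF l2_summable[OF y]] unfolding has_sum_def l2_norm_power2 .
  then have "((\<lambda>F. sqrt ((l2_norm y)\<^sup>2 - (\<Sum>j\<in>F. (cmod (y j))\<^sup>2))) \<longlongrightarrow> sqrt ((l2_norm y)\<^sup>2 - (l2_norm y)\<^sup>2))
      (finite_subsets_at_top UNIV)"
    by (intro tendsto_intros)
  then have "((\<lambda>F. sqrt ((l2_norm y)\<^sup>2 - (\<Sum>j\<in>F. (cmod (y j))\<^sup>2))) \<longlongrightarrow> 0) (finite_subsets_at_top UNIV)"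
    by simp
  then show ?thesis
    by (rule Lim_transform_eventually) (auto intro!: eventually_finite_subsets_at_top_weakI simp: tail)
qed

lemma l2_inner_abs_summable:
  assumes "x \<in> l2" and "y \<in> l2"
  shows "(\<lambda>i. norm (cnj (x i) * y i)) summable_on UNIV"
proof -
  have "(\<lambda>i. (cmod (x i))\<^sup>2 + (cmod (y i))\<^sup>2) summable_on UNIV"
    using assms by (intro summable_on_add l2_summable)
  moreover have "norm (cnj (x i) * y i) \<le> (cmod (x i))\<^sup>2 + (cmod (y i))\<^sup>2" for i
  proof -
    have "norm (cnj (x i) * y i) = cmod (x i) * cmod (y i)" by (simp add: norm_mult)
    moreover have "cmod (x i) * cmod (y i) \<ge> 0" by simp
    ultimately show ?thesis using sum_squares_bound[of "cmod (x i)" "cmod (y i)"] by linarith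
  qed
  ultimately show ?thesis by (rule summable_on_comparison_test) simp
qed

lemma l2_inner_summable:
  "x \<in> l2 \<Longrightarrow> y \<in> l2 \<Longrightarrow> (\<lambda>i. cnj (x i) * y i) summable_on UNIV"
  using l2_inner_abs_summable by (rule abs_summable_summable)

lemma l2_inner_lincomb_right:
  assumes "x \<in> l2" and "y \<in> l2" and "z \<in> l2"
  shows "l2_inner x (\<lambda>i. a * y i + b * z i) = a * l2_inner x y + b * l2_inner x z"
  unfolding l2_inner_def using l2_inner_summable[OF assms(1,2)] l2_inner_summable[OF assms(1,3)]
  by (simp add: algebra_simps infsum_add summable_on_cmult_right infsum_cmult_right)

lemma l2_inner_lincomb_left:
  assumes "x \<in> l2" and "y \<in> l2" and "z \<in> l2"
  shows "l2_inner (\<lambda>i. a * x i + b * y i) z = cnj a * l2_inner x z + cnj b * l2_inner y z"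
  unfolding l2_inner_def using l2_inner_summable[OF assms(1,3)] l2_inner_summable[OF assms(2,3)]
  by (simp add: algebra_simps infsum_add summable_on_cmult_right infsum_cmult_right)

lemma l2_inner_self:
  assumes "x \<in> l2"
  shows "l2_inner x x = (l2_norm x)\<^sup>2"
proof -
  have "cnj (x i) * x i = complex_of_real ((cmod (x i))\<^sup>2)" for i
    by (metis complex_norm_square mult.commute of_real_power)
  then have "l2_inner x x = (\<Sum>\<^sub>\<infinity>i. complex_of_real ((cmod (x i))\<^sup>2))"
    by (simp add: l2_inner_def)
  also have "\<dots> = complex_of_real (\<Sum>\<^sub>\<infinity>i. (cmod (x i))\<^sup>2)"
    by (rule infsumI, subst has_sum_of_real_iff) (rule has_sum_infsum[OF l2_summable[OF assms]])
  finally show ?thesis by (simp add: l2_norm_power2)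
qed

lemma l2_inner_basis_vec: "l2_inner (basis_vec k) y = y k"
proof -
  have "l2_inner (basis_vec k) y = (\<Sum>\<^sub>\<infinity>i\<in>{k}. cnj (basis_vec k i) * y i)"
    unfolding l2_inner_def by (rule infsum_cong_neutral) (auto simp: basis_vec_def)
  then show ?thesis by (simp add: basis_vec_def)
qed

lemma l2_Cauchy_Schwarz:
  assumes "x \<in> l2" and "y \<in> l2"
  shows "cmod (l2_inner x y) \<le> l2_norm x * l2_norm y"
proof -
  have L2_set_le: "L2_set (\<lambda>i. cmod (z i)) F \<le> l2_norm z" if "z \<in> l2" "finite F" for z F
    unfolding L2_set_def l2_norm_def
    using finite_sum_le_infsum[OF l2_summable[OF that(1)] that(2)] by simp
  have "cmod (l2_inner x y) \<le> (\<Sum>\<^sub>\<infinity>i. norm (cnj (x i) * y i))"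
    unfolding l2_inner_def by (rule norm_infsum_bound[OF l2_inner_abs_summable[OF assms]])
  also have "\<dots> \<le> l2_norm x * l2_norm y"
  proof (rule infsum_le_finite_sums[OF l2_inner_abs_summable[OF assms]])
    fix F :: "'a set" assume "finite F"
    have "(\<Sum>i\<in>F. norm (cnj (x i) * y i)) = (\<Sum>i\<in>F. \<bar>cmod (x i)\<bar> * \<bar>cmod (y i)\<bar>)"
      by (simp add: norm_mult)
    also have "\<dots> \<le> L2_set (\<lambda>i. cmod (x i)) F * L2_set (\<lambda>i. cmod (y i)) F"
      by (rule L2_set_mult_ineq)
    also have "\<dots> \<le> l2_norm x * l2_norm y"
      using L2_set_le assms \<open>finite F\<close> by (intro mult_mono) auto
    finally show "(\<Sum>i\<in>F. norm (cnj (x i) * y i)) \<le> l2_norm x * l2_norm y" .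
  qed
  finally show ?thesis .
qed

section \<open>Bounded operators\<close>

definition linear_op :: "(('i \<Rightarrow> complex) \<Rightarrow> ('i \<Rightarrow> complex)) \<Rightarrow> bool" where
  "linear_op A \<longleftrightarrow>
     (\<forall>x\<in>l2. A x \<in> l2) \<and>
     (\<forall>x\<in>l2. \<forall>y\<in>l2. A (\<lambda>i. x i + y i) = (\<lambda>i. A x i + A y i)) \<and>
     (\<forall>x\<in>l2. \<forall>c. A (\<lambda>i. c * x i) = (\<lambda>i. c * A x i))"

lemma bounded_op_iff:
  "bounded_op A \<longleftrightarrow> linear_op A \<and> (\<exists>K. \<forall>x\<in>l2. l2_norm (A x) \<le> K * l2_norm x)"
  by (auto simp: bounded_op_def linear_op_def)

lemma linear_op_l2: "linear_op A \<Longrightarrow> x \<in> l2 \<Longrightarrow> A x \<in> l2"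
  by (simp add: linear_op_def)

lemma linear_op_lincomb:
  assumes A: "linear_op A" and "x \<in> l2" and "y \<in> l2"
  shows "A (\<lambda>i. x i + c * y i) = (\<lambda>i. A x i + c * A y i)"
  using assms l2_scale[of y c] unfolding linear_op_def by simp

lemma linear_op_zero:
  assumes "linear_op A"
  shows "A (\<lambda>i. 0) = (\<lambda>i. 0)"
proof -
  have "\<forall>x\<in>l2. \<forall>c. A (\<lambda>i. c * x i) = (\<lambda>i. c * A x i)"
    using assms unfolding linear_op_def by blast
  from this[rule_format, OF l2_zero, of 0] show ?thesis by simp
qed

lemma linear_op_shift:
  fixes A :: "('i \<Rightarrow> complex) \<Rightarrow> ('i \<Rightarrow> complex)"
  assumes "linear_op A"
  shows "linear_op (\<lambda>x i. A x i - c * x i)"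
  unfolding linear_op_def
proof (intro conjI ballI allI)
  fix x y :: "'i \<Rightarrow> complex" assume x: "x \<in> l2" and y: "y \<in> l2"
  show "(\<lambda>i. A x i - c * x i) \<in> l2" by (intro l2_diff l2_scale linear_op_l2[OF assms] x)
  show "(\<lambda>i. A (\<lambda>i. x i + y i) i - c * (x i + y i)) = (\<lambda>i. A x i - c * x i + (A y i - c * y i))"
    using assms x y unfolding linear_op_def by (simp add: algebra_simps)
next
  fix x :: "'i \<Rightarrow> complex" and d assume x: "x \<in> l2"
  show "(\<lambda>i. A (\<lambda>i. d * x i) i - c * (d * x i)) = (\<lambda>i. d * (A x i - c * x i))"
    using assms x unfolding linear_op_def by (simp add: algebra_simps)
qed

lemma linear_op_truncation:
  assumes A: "linear_op A" and y: "y \<in> l2" and F: "finite F"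
  shows "A (\<lambda>j. if j \<in> F then y j else 0) = (\<lambda>i. \<Sum>k\<in>F. y k * A (basis_vec k) i)"
  using F
proof (induction F rule: finite_induct)
  case empty
  then show ?case using linear_op_zero[OF A] by simp
next
  case (insert k F)
  let ?yF = "\<lambda>j. if j \<in> F then y j else 0"
  have yF: "?yF \<in> l2" by (rule l2_comparison[OF y]) simp
  have "(\<lambda>j. if j \<in> insert k F then y j else 0) = (\<lambda>j. ?yF j + y k * basis_vec k j)"
    using insert(2) by (auto simp: basis_vec_def)
  then have "A (\<lambda>j. if j \<in> insert k F then y j else 0) = (\<lambda>i. A ?yF i + y k * A (basis_vec k) i)"
    using linear_op_lincomb[OF A yF basis_vec_in_l2] by simp
  then show ?case using insert by (simp add: add.commute)
qed

lemma bounded_op_has_sum: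
  assumes A: "bounded_op A" and y: "y \<in> l2"
  shows "((\<lambda>k. y k * A (basis_vec k) i) has_sum A y i) UNIV"
proof -
  have lin: "linear_op A" using A by (simp add: bounded_op_iff)
  obtain K where K: "\<And>x. x \<in> l2 \<Longrightarrow> l2_norm (A x) \<le> K * l2_norm x"
    using A by (auto simp: bounded_op_iff)
  define trunc where "trunc F = (\<lambda>j. if j \<in> F then y j else 0)" for F
  define tail where "tail F = (\<lambda>j. if j \<in> F then 0 else y j)" for F
  have trunc_l2: "trunc F \<in> l2" for F unfolding trunc_def by (rule l2_comparison[OF y]) simp
  have tail_l2: "tail F \<in> l2" for F unfolding tail_def by (rule l2_comparison[OF y]) simp
  have decomp: "y = (\<lambda>j. trunc F j + 1 * tail F j)" for F
    by (auto simp: trunc_def tail_def)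
  have "A y = (\<lambda>i. A (trunc F) i + 1 * A (tail F) i)" for F
    by (subst (1) decomp[of F]) (rule linear_op_lincomb[OF lin trunc_l2 tail_l2])
  then have split: "A y i = A (trunc F) i + A (tail F) i" for F
    by (simp add: fun_eq_iff)
  have partial_sums: "(\<Sum>k\<in>F. y k * A (basis_vec k) i) = A y i - A (tail F) i" if "finite F" for F
    using linear_op_truncation[OF lin y that] split[of F] unfolding trunc_def by simp
  have "\<forall>F. cmod (A (tail F) i) \<le> K * l2_norm (tail F)"
    by (intro allI order_trans[OF norm_coord_le_l2_norm[OF linear_op_l2[OF lin tail_l2]] K[OF tail_l2]])
  moreover have "((\<lambda>F. K * l2_norm (tail F)) \<longlongrightarrow> 0) (finite_subsets_at_top UNIV)"
    unfolding tail_def by (rule tendsto_mult_right_zero[OF l2_norm_tail_tendsto_0[OF y]])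
  ultimately have "((\<lambda>F. A (tail F) i) \<longlongrightarrow> 0) (finite_subsets_at_top UNIV)"
    by (rule Lim_null_comparison[OF always_eventually])
  then have "((\<lambda>F. A y i - A (tail F) i) \<longlongrightarrow> A y i) (finite_subsets_at_top UNIV)"
    using tendsto_diff[OF tendsto_const[of "A y i"]] by fastforce
  then show ?thesis unfolding has_sum_def
    by (rule Lim_transform_eventually[OF _ eventually_finite_subsets_at_top_weakI]) (simp add: partial_sums)
qed

lemma bounded_op_apply_eq_inner_row:
  assumes "bounded_op A" and "y \<in> l2"
  shows "A y i = l2_inner (\<lambda>k. cnj (A (basis_vec k) i)) y"
  using infsumI[OF bounded_op_has_sum[OF assms]] by (simp add: l2_inner_def mult.commute)

lemma bounded_op_zero_if_basis_zero:
  assumes "bounded_op A" and "\<And>j. A (basis_vec j) = (\<lambda>i. 0)" and "x \<in> l2"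
  shows "A x = (\<lambda>i. 0)"
proof
  fix i
  have "((\<lambda>k. x k * A (basis_vec k) i) has_sum A x i) UNIV"
    using assms(1,3) by (rule bounded_op_has_sum)
  moreover have "((\<lambda>k. x k * A (basis_vec k) i) has_sum 0) UNIV" using assms(2) by simp
  ultimately show "A x i = 0" using has_sum_unique by blast
qed

section \<open>Hermitian operators\<close>

lemma linear_op_quadratic_form_lincomb:
  assumes R: "linear_op R" and x: "x \<in> l2" and y: "y \<in> l2"
  shows "l2_inner (\<lambda>i. x i + c * y i) (R (\<lambda>i. x i + c * y i))
     = l2_inner x (R x) + c * l2_inner x (R y) + cnj c * l2_inner y (R x) + cnj c * c * l2_inner y (R y)"
proof -
  have Rx: "R x \<in> l2" and Ry: "R y \<in> l2" using R x y by (auto intro: linear_op_l2)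
  have "l2_inner (\<lambda>i. x i + c * y i) (\<lambda>i. R x i + c * R y i)
     = l2_inner x (R x) + c * l2_inner x (R y) + cnj c * l2_inner y (R x) + cnj c * c * l2_inner y (R y)"
    using l2_inner_lincomb_left[OF x y l2_lincomb[OF Rx Ry], of 1 c 1 c]
      l2_inner_lincomb_right[OF x Rx Ry, of 1 c] l2_inner_lincomb_right[OF y Rx Ry, of 1 c]
    by (simp add: algebra_simps)
  then show ?thesis using linear_op_lincomb[OF R x y] by simp
qed

definition hermitian_op :: "(('i \<Rightarrow> complex) \<Rightarrow> ('i \<Rightarrow> complex)) \<Rightarrow> bool" where
  "hermitian_op R \<longleftrightarrow> (\<forall>x\<in>l2. \<forall>y\<in>l2. l2_inner x (R y) = cnj (l2_inner y (R x)))"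

lemma hermitian_opD:
  "hermitian_op R \<Longrightarrow> x \<in> l2 \<Longrightarrow> y \<in> l2 \<Longrightarrow> l2_inner x (R y) = cnj (l2_inner y (R x))"
  unfolding hermitian_op_def by blast

lemma hermitian_opI:
  fixes R :: "('i \<Rightarrow> complex) \<Rightarrow> ('i \<Rightarrow> complex)"
  assumes R: "linear_op R" and real: "\<And>x. x \<in> l2 \<Longrightarrow> Im (l2_inner x (R x)) = 0"
  shows "hermitian_op R"
  unfolding hermitian_op_def
proof (intro ballI)
  fix x y :: "'i \<Rightarrow> complex" assume x: "x \<in> l2" and y: "y \<in> l2"
  have "Im (l2_inner x (R y)) + Im (l2_inner y (R x)) = 0"
    using real[OF l2_lincomb[OF x y, of 1 1]] real[OF x] real[OF y]
    using linear_op_quadratic_form_lincomb[OF R x y, of 1] by simp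
  moreover have "Re (l2_inner x (R y)) - Re (l2_inner y (R x)) = 0"
    using real[OF l2_lincomb[OF x y, of 1 \<i>]] real[OF x] real[OF y]
    using linear_op_quadratic_form_lincomb[OF R x y, of \<i>] by simp
  ultimately show "l2_inner x (R y) = cnj (l2_inner y (R x))"
    by (intro complex_eqI) auto
qed

lemma hermitian_op_Re_inner_le:
  assumes R: "linear_op R" and herm: "hermitian_op R"
    and bound: "\<And>x. x \<in> l2 \<Longrightarrow> \<bar>Re (l2_inner x (R x))\<bar> \<le> M * (l2_norm x)\<^sup>2"
    and u: "u \<in> l2" and v: "v \<in> l2"
  shows "4 * Re (l2_inner v (R u)) \<le> 2 * M * ((l2_norm u)\<^sup>2 + (l2_norm v)\<^sup>2)"
proof -
  have "Re (l2_inner u (R v)) = Re (l2_inner v (R u))"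
    using hermitian_opD[OF herm u v] by simp
  moreover have "Re (l2_inner (\<lambda>i. u i + v i) (R (\<lambda>i. u i + v i)))
      = Re (l2_inner u (R u)) + Re (l2_inner u (R v)) + Re (l2_inner v (R u)) + Re (l2_inner v (R v))"
    using linear_op_quadratic_form_lincomb[OF R u v, of 1] by simp
  moreover have "Re (l2_inner (\<lambda>i. u i - v i) (R (\<lambda>i. u i - v i)))
      = Re (l2_inner u (R u)) - Re (l2_inner u (R v)) - Re (l2_inner v (R u)) + Re (l2_inner v (R v))"
    using linear_op_quadratic_form_lincomb[OF R u v, of "-1"] by simp
  moreover have "Re (l2_inner (\<lambda>i. u i + v i) (R (\<lambda>i. u i + v i))) \<le> M * (l2_norm (\<lambda>i. u i + v i))\<^sup>2"
    using bound[OF l2_add[OF u v]] by linarith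
  moreover have "- Re (l2_inner (\<lambda>i. u i - v i) (R (\<lambda>i. u i - v i))) \<le> M * (l2_norm (\<lambda>i. u i - v i))\<^sup>2"
    using bound[OF l2_diff[OF u v]] by linarith
  moreover have "M * (l2_norm (\<lambda>i. u i + v i))\<^sup>2 + M * (l2_norm (\<lambda>i. u i - v i))\<^sup>2
      = 2 * M * ((l2_norm u)\<^sup>2 + (l2_norm v)\<^sup>2)"
    using l2_parallelogram[OF u v] by (metis distrib_left mult.assoc mult.left_commute)
  ultimately show ?thesis by linarith
qed

lemma hermitian_op_norm_le:
  assumes R: "linear_op R" and herm: "hermitian_op R" and "M \<ge> 0"
    and bound: "\<And>x. x \<in> l2 \<Longrightarrow> \<bar>Re (l2_inner x (R x))\<bar> \<le> M * (l2_norm x)\<^sup>2"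
    and u: "u \<in> l2"
  shows "l2_norm (R u) \<le> M * l2_norm u"
proof -
  define N where "N = (l2_norm (R u))\<^sup>2"
  have Ru: "R u \<in> l2" by (rule linear_op_l2[OF R u])
  \<comment> \<open>test the polarisation bound against \<open>v = t R u\<close>; the choice \<open>t = 1 / M\<close> is optimal\<close>
  have scaled: "4 * t * N \<le> 2 * M * ((l2_norm u)\<^sup>2 + t\<^sup>2 * N)" if "t \<ge> 0" for t :: real
  proof -
    have "l2_inner (\<lambda>i. of_real t * R u i) (R u) = of_real t * of_real N"
      using l2_inner_lincomb_left[OF Ru Ru Ru, of "of_real t" 0] by (simp add: l2_inner_self[OF Ru] N_def)
    moreover have "(l2_norm (\<lambda>i. of_real t * R u i))\<^sup>2 = t\<^sup>2 * N"
      using that by (simp add: l2_norm_scale N_def power_mult_distrib)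
    ultimately show ?thesis
      using hermitian_op_Re_inner_le[OF R herm bound u l2_scale[OF Ru, of "of_real t"]] by simp
  qed
  have "N \<le> M\<^sup>2 * (l2_norm u)\<^sup>2"
  proof (cases "M = 0")
    case True
    then show ?thesis using scaled[of 1] by simp
  next
    case False
    with \<open>M \<ge> 0\<close> have "M > 0" by simp
    have "2 * M * ((l2_norm u)\<^sup>2 + (1 / M)\<^sup>2 * N) = 2 * M * (l2_norm u)\<^sup>2 + 2 * (N / M)"
      using \<open>M > 0\<close> by (simp add: power2_eq_square algebra_simps)
    then have "N / M \<le> M * (l2_norm u)\<^sup>2"
      using scaled[of "1 / M"] \<open>M > 0\<close> by simp
    then show ?thesis
      using \<open>M > 0\<close> by (simp add: pos_divide_le_eq power2_eq_square mult_ac)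
  qed
  then have "(l2_norm (R u))\<^sup>2 \<le> (M * l2_norm u)\<^sup>2"
    by (simp add: N_def power_mult_distrib)
  then show ?thesis
    by (rule power2_le_imp_le) (use \<open>M \<ge> 0\<close> in simp)
qed

lemma positive_op_shift:
  fixes S :: "('i \<Rightarrow> complex) \<Rightarrow> ('i \<Rightarrow> complex)"
  assumes S: "linear_op S" and pos: "positive_op S"
    and norm_S: "\<And>x. x \<in> l2 \<Longrightarrow> l2_norm (S x) \<le> a * l2_norm x" and "a \<le> 2 * c" and "0 \<le> c"
  defines "R \<equiv> \<lambda>x i. S x i - of_real c * x i"
  shows "bounded_op R" and "hermitian_op R" and "\<And>u. u \<in> l2 \<Longrightarrow> l2_norm (R u) \<le> c * l2_norm u"
proof -
  have R: "linear_op R" unfolding R_def by (rule linear_op_shift[OF S])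
  have form: "l2_inner x (R x) = l2_inner x (S x) - of_real (c * (l2_norm x)\<^sup>2)" if x: "x \<in> l2" for x
    using l2_inner_lincomb_right[OF x linear_op_l2[OF S x] x, of 1 "- of_real c"] l2_inner_self[OF x]
    by (simp add: R_def)
  have "Im (l2_inner x (R x)) = 0" if "x \<in> l2" for x
    using pos that form[OF that] by (simp add: positive_op_def)
  then show herm: "hermitian_op R" by (rule hermitian_opI[OF R])
  have "\<bar>Re (l2_inner x (R x))\<bar> \<le> c * (l2_norm x)\<^sup>2" if x: "x \<in> l2" for x
  proof -
    have "Re (l2_inner x (S x)) \<le> cmod (l2_inner x (S x))" by (rule complex_Re_le_cmod)
    also have "\<dots> \<le> l2_norm x * l2_norm (S x)" by (rule l2_Cauchy_Schwarz[OF x linear_op_l2[OF S x]])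
    also have "\<dots> \<le> l2_norm x * (a * l2_norm x)" by (rule mult_left_mono[OF norm_S[OF x]]) simp
    also have "\<dots> \<le> 2 * c * (l2_norm x)\<^sup>2"
      using mult_right_mono[OF \<open>a \<le> 2 * c\<close>, of "(l2_norm x)\<^sup>2"] by (simp add: power2_eq_square mult_ac)
    finally have "Re (l2_inner x (S x)) \<le> 2 * c * (l2_norm x)\<^sup>2" .
    moreover have "0 \<le> Re (l2_inner x (S x))" using pos x by (simp add: positive_op_def)
    ultimately show ?thesis using form[OF x] by (simp add: abs_le_iff)
  qed
  then show bound: "\<And>u. u \<in> l2 \<Longrightarrow> l2_norm (R u) \<le> c * l2_norm u"
    by (rule hermitian_op_norm_le[OF R herm \<open>0 \<le> c\<close>])
  show "bounded_op R" using R bound by (auto simp: bounded_op_iff)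
qed

section \<open>Hilbert-Schmidt norm\<close>

lemma hs_sq_columns: "hs_sq A = (\<Sum>\<^sub>\<infinity>j. enn_sqnorm (A (basis_vec j)))"
  by (simp add: hs_sq_def enn_sqnorm_def)

lemma hs_sq_rows: "hs_sq A = (\<Sum>\<^sub>\<infinity>i. enn_sqnorm (\<lambda>k. cnj (A (basis_vec k) i)))"
  unfolding hs_sq_def enn_sqnorm_def by (simp only: complex_mod_cnj, rule infsum_swap_ennreal)

lemma hs_sq_row_in_l2:
  assumes "hs_sq A < top"
  shows "(\<lambda>k. cnj (A (basis_vec k) i)) \<in> l2"
proof (rule l2_if_enn_sqnorm_finite)
  have "enn_sqnorm (\<lambda>k. cnj (A (basis_vec k) i)) \<le> hs_sq A"
    unfolding hs_sq_rows using sum_le_infsum_ennreal[of "{i}" UNIV] by simp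
  then show "enn_sqnorm (\<lambda>k. cnj (A (basis_vec k) i)) < top" using assms by simp
qed

lemma hs_sq_eq_0_iff: "hs_sq A = 0 \<longleftrightarrow> (\<forall>j. A (basis_vec j) = (\<lambda>i. 0))"
proof
  assume "hs_sq A = 0"
  then have "ennreal ((cmod (A (basis_vec j) i))\<^sup>2) = 0" for i j
    using sum_le_infsum_ennreal[of "{i}" UNIV "\<lambda>i. ennreal ((cmod (A (basis_vec j) i))\<^sup>2)"]
      sum_le_infsum_ennreal[of "{j}" UNIV "\<lambda>j. enn_sqnorm (A (basis_vec j))"]
    by (simp add: hs_sq_columns enn_sqnorm_def)
  then show "\<forall>j. A (basis_vec j) = (\<lambda>i. 0)" by (simp add: fun_eq_iff)
qed (simp add: hs_sq_def)

lemma l2_norm_le_hs_norm: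
  assumes S: "bounded_op S" and fin: "hs_sq S < top" and x: "x \<in> l2"
  shows "l2_norm (S x) \<le> enn2real (hs_norm S) * l2_norm x"
proof -
  define r where "r i = (\<lambda>k. cnj (S (basis_vec k) i))" for i
  define h where "h = enn2real (hs_sq S)"
  have r: "r i \<in> l2" for i unfolding r_def by (rule hs_sq_row_in_l2[OF fin])
  have rows: "hs_sq S = (\<Sum>\<^sub>\<infinity>i. enn_sqnorm (r i))" unfolding r_def by (rule hs_sq_rows)
  have h: "hs_sq S = ennreal h" "h \<ge> 0" using fin by (simp_all add: h_def less_top)
  have "S x \<in> l2" using S x by (simp add: bounded_op_iff linear_op_l2)
  then have "ennreal ((l2_norm (S x))\<^sup>2) = enn_sqnorm (S x)" by (simp add: enn_sqnorm_l2)
  also have "\<dots> = (\<Sum>\<^sub>\<infinity>i. ennreal ((cmod (l2_inner (r i) x))\<^sup>2))"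
    unfolding enn_sqnorm_def r_def bounded_op_apply_eq_inner_row[OF S x] ..
  also have "\<dots> \<le> (\<Sum>\<^sub>\<infinity>i. enn_sqnorm (r i) * ennreal ((l2_norm x)\<^sup>2))"
  proof (rule infsum_mono)
    fix i
    have "(cmod (l2_inner (r i) x))\<^sup>2 \<le> ((l2_norm (r i)) * l2_norm x)\<^sup>2"
      by (rule power_mono[OF l2_Cauchy_Schwarz[OF r x]]) simp
    then show "ennreal ((cmod (l2_inner (r i) x))\<^sup>2) \<le> enn_sqnorm (r i) * ennreal ((l2_norm x)\<^sup>2)"
      by (simp add: enn_sqnorm_l2[OF r] ennreal_mult'[symmetric] power_mult_distrib ennreal_leI)
  qed (simp_all add: nonneg_summable_on_complete)
  also have "\<dots> = ennreal (h * (l2_norm x)\<^sup>2)"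
    using infsum_ennreal_cmult[of "ennreal ((l2_norm x)\<^sup>2)" "\<lambda>i. enn_sqnorm (r i)" UNIV]
    by (simp add: rows[symmetric] h ennreal_mult mult.commute)
  finally have "(l2_norm (S x))\<^sup>2 \<le> (sqrt h * l2_norm x)\<^sup>2"
    using h by (simp add: power_mult_distrib ennreal_le_iff mult_nonneg_nonneg)
  then have "l2_norm (S x) \<le> sqrt h * l2_norm x"
    by (rule power2_le_imp_le) (simp add: h)
  moreover have "enn2real (hs_norm S) = sqrt h"
    using fin by (simp add: hs_norm_def esqrt_def h_def)
  ultimately show ?thesis by simp
qed

lemma hs_sq_diff_le: "hs_sq (\<lambda>x i. U x i - V x i) \<le> 2 * hs_sq U + 2 * hs_sq V"
proof -
  have "hs_sq (\<lambda>x i. U x i - V x i)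
      \<le> (\<Sum>\<^sub>\<infinity>j. 2 * enn_sqnorm (U (basis_vec j)) + 2 * enn_sqnorm (V (basis_vec j)))"
    unfolding hs_sq_columns
    by (intro infsum_mono enn_sqnorm_diff_le) (simp_all add: nonneg_summable_on_complete)
  also have "\<dots> = 2 * hs_sq U + 2 * hs_sq V"
    by (simp add: hs_sq_columns infsum_add nonneg_summable_on_complete infsum_ennreal_cmult)
  finally show ?thesis .
qed

lemma hs_sq_comp_left_le:
  assumes cols: "\<And>j. X (basis_vec j) \<in> l2"
    and R: "\<And>u. u \<in> l2 \<Longrightarrow> R u \<in> l2" and norm_R: "\<And>u. u \<in> l2 \<Longrightarrow> l2_norm (R u) \<le> M * l2_norm u"
  shows "hs_sq (\<lambda>x. R (X x)) \<le> ennreal (M\<^sup>2) * hs_sq X"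
proof -
  have "hs_sq (\<lambda>x. R (X x)) \<le> (\<Sum>\<^sub>\<infinity>j. ennreal (M\<^sup>2) * enn_sqnorm (X (basis_vec j)))"
    unfolding hs_sq_columns
    by (intro infsum_mono enn_sqnorm_le_if_norm_le cols R norm_R) (simp_all add: nonneg_summable_on_complete)
  also have "\<dots> = ennreal (M\<^sup>2) * hs_sq X"
    unfolding hs_sq_columns by (rule infsum_ennreal_cmult) simp
  finally show ?thesis .
qed

text \<open>For Hermitian \<open>R\<close>, \<open>(X R)\<^sup>* = R X\<^sup>*\<close>: the rows of \<open>X R\<close> are conjugates of \<open>R\<close> applied to the
  conjugated rows of \<open>X\<close>.\<close>

lemma comp_hermitian_op_entry:
  assumes X: "bounded_op X" and fin: "hs_sq X < top" and R: "bounded_op R" and herm: "hermitian_op R"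
  shows "X (R (basis_vec j)) i = cnj (R (\<lambda>k. cnj (X (basis_vec k) i)) j)"
proof -
  have "R (basis_vec j) \<in> l2" using R by (simp add: bounded_op_iff linear_op_l2 basis_vec_in_l2)
  then have "X (R (basis_vec j)) i = l2_inner (\<lambda>k. cnj (X (basis_vec k) i)) (R (basis_vec j))"
    by (rule bounded_op_apply_eq_inner_row[OF X])
  also have "\<dots> = cnj (l2_inner (basis_vec j) (R (\<lambda>k. cnj (X (basis_vec k) i))))"
    by (rule hermitian_opD[OF herm hs_sq_row_in_l2[OF fin] basis_vec_in_l2])
  finally show ?thesis by (simp add: l2_inner_basis_vec)
qed

lemma hs_sq_comp_right_le:
  assumes X: "bounded_op X" and R: "bounded_op R" and herm: "hermitian_op R"
    and norm_R: "\<And>u. u \<in> l2 \<Longrightarrow> l2_norm (R u) \<le> M * l2_norm u"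
  shows "hs_sq (\<lambda>x. X (R x)) \<le> ennreal (M\<^sup>2) * hs_sq X"
proof (cases "hs_sq X < top")
  case True
  define w where "w i = (\<lambda>k. cnj (X (basis_vec k) i))" for i
  have w: "w i \<in> l2" for i unfolding w_def by (rule hs_sq_row_in_l2[OF True])
  have R_l2: "R u \<in> l2" if "u \<in> l2" for u using R that by (simp add: bounded_op_iff linear_op_l2)
  have "hs_sq (\<lambda>x. X (R x)) = (\<Sum>\<^sub>\<infinity>i. enn_sqnorm (R (w i)))"
    unfolding hs_sq_def enn_sqnorm_def comp_hermitian_op_entry[OF X True R herm] complex_mod_cnj w_def
    by (rule infsum_swap_ennreal)
  also have "\<dots> \<le> (\<Sum>\<^sub>\<infinity>i. ennreal (M\<^sup>2) * enn_sqnorm (w i))"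
    by (intro infsum_mono enn_sqnorm_le_if_norm_le w R_l2 norm_R) (simp_all add: nonneg_summable_on_complete)
  also have "\<dots> = ennreal (M\<^sup>2) * hs_sq X"
    unfolding hs_sq_rows[of X] w_def by (rule infsum_ennreal_cmult) simp
  finally show ?thesis .
next
  case False
  show ?thesis
  proof (cases "M = 0")
    case True
    have "R u = (\<lambda>i. 0)" if "u \<in> l2" for u
      using R that norm_R[OF that] True by (intro l2_eq_0_if_norm_0) (simp_all add: bounded_op_iff linear_op_l2)
    moreover have "X (\<lambda>i. 0) = (\<lambda>i. 0)" using X by (simp add: bounded_op_iff linear_op_zero)
    ultimately have "hs_sq (\<lambda>x. X (R x)) = 0"
      by (simp add: hs_sq_eq_0_iff basis_vec_in_l2)
    then show ?thesis by simp
  next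
    case False
    then have "ennreal (M\<^sup>2) * hs_sq X = top"
      using \<open>\<not> hs_sq X < top\<close> by (simp add: not_less top_unique ennreal_mult_eq_top_iff)
    then show ?thesis by simp
  qed
qed

lemma esqrt_power2 [simp]: "(esqrt a)\<^sup>2 = a"
proof (cases "a = \<infinity>")
  case False
  then have "(esqrt a)\<^sup>2 = ennreal ((sqrt (enn2real a))\<^sup>2)"
    by (simp add: esqrt_def ennreal_power)
  also have "\<dots> = a" using False by (simp add: ennreal_enn2real_if less_top)
  finally show ?thesis .
qed (simp add: esqrt_def power2_eq_square)

lemma esqrt_unique:
  assumes "b\<^sup>2 = a"
  shows "esqrt a = b"
proof (cases "b = \<infinity>")
  case False
  then obtain r where b: "b = ennreal r" and "r \<ge> 0" by (cases b) auto
  with assms have "a = ennreal (r\<^sup>2)" by (simp add: ennreal_power)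
  with b \<open>r \<ge> 0\<close> show ?thesis by (simp add: esqrt_def)
qed (use assms in \<open>simp add: esqrt_def power2_eq_square\<close>)

lemma esqrt_mult: "esqrt (a * b) = esqrt a * esqrt b"
  by (rule esqrt_unique) (simp add: power_mult_distrib)

lemma esqrt_mono:
  assumes "a \<le> b"
  shows "esqrt a \<le> esqrt b"
proof (cases "b = \<infinity>")
  case False
  with assms have "a \<noteq> \<infinity>" by (auto simp: top_unique)
  with False assms show ?thesis
    by (auto simp: esqrt_def intro!: ennreal_leI real_sqrt_le_mono enn2real_mono simp: less_top)
qed (simp add: esqrt_def)

lemma ennreal_enn2real_esqrt_power2: "a < top \<Longrightarrow> ennreal ((enn2real (esqrt a))\<^sup>2) = a"
  by (simp add: esqrt_def ennreal_enn2real_if less_top)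

section \<open>The commutator estimate\<close>

lemma hs_sq_commutator_le_finite:
  fixes S T X :: "('i \<Rightarrow> complex) \<Rightarrow> ('i \<Rightarrow> complex)"
  assumes S: "bounded_op S" and T: "bounded_op T" and X: "bounded_op X"
    and pos_S: "positive_op S" and pos_T: "positive_op T"
    and fin_S: "hs_sq S < top" and fin_T: "hs_sq T < top"
  shows "hs_sq (\<lambda>x i. S (X x) i - X (T x) i) \<le> hs_sq X * (hs_sq S + hs_sq T)"
proof -
  define a b where "a = enn2real (hs_norm S)" and "b = enn2real (hs_norm T)"
  define c where "c = max a b / 2"
  define RS RT where "RS = (\<lambda>x i. S x i - of_real c * x i)" and "RT = (\<lambda>x i. T x i - of_real c * x i)"
  have "0 \<le> a" "0 \<le> b" "0 \<le> c" by (simp_all add: a_def b_def c_def max_def)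
  have "a \<le> 2 * c" "b \<le> 2 * c" by (simp_all add: c_def)
  have lin: "linear_op S" "linear_op T" "linear_op X" using S T X by (simp_all add: bounded_op_iff)
  have RS: "bounded_op RS" "hermitian_op RS" "\<And>u. u \<in> l2 \<Longrightarrow> l2_norm (RS u) \<le> c * l2_norm u"
    using positive_op_shift[OF lin(1) pos_S l2_norm_le_hs_norm[OF S fin_S] _ \<open>0 \<le> c\<close>] \<open>a \<le> 2 * c\<close>
    by (simp_all add: a_def RS_def)
  have RT: "bounded_op RT" "hermitian_op RT" "\<And>u. u \<in> l2 \<Longrightarrow> l2_norm (RT u) \<le> c * l2_norm u"
    using positive_op_shift[OF lin(2) pos_T l2_norm_le_hs_norm[OF T fin_T] _ \<open>0 \<le> c\<close>] \<open>b \<le> 2 * c\<close>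
    by (simp_all add: b_def RT_def)
  \<comment> \<open>shifting both \<open>S\<close> and \<open>T\<close> by the same scalar leaves the commutator unchanged\<close>
  have "X (RT (basis_vec j)) = (\<lambda>i. X (T (basis_vec j)) i - of_real c * X (basis_vec j) i)" for j
    using linear_op_lincomb[OF lin(3) linear_op_l2[OF lin(2) basis_vec_in_l2] basis_vec_in_l2,
        where c = "- of_real c"]
    by (simp add: RT_def)
  then have "hs_sq (\<lambda>x i. S (X x) i - X (T x) i) = hs_sq (\<lambda>x i. RS (X x) i - X (RT x) i)"
    by (simp add: hs_sq_def RS_def)
  also have "\<dots> \<le> 2 * hs_sq (\<lambda>x. RS (X x)) + 2 * hs_sq (\<lambda>x. X (RT x))"
    by (rule hs_sq_diff_le)
  also have "\<dots> \<le> 2 * (ennreal (c\<^sup>2) * hs_sq X) + 2 * (ennreal (c\<^sup>2) * hs_sq X)"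
    using RS(1) linear_op_l2[OF lin(3) basis_vec_in_l2]
    by (intro add_mono mult_left_mono hs_sq_comp_left_le[OF _ _ RS(3)] hs_sq_comp_right_le[OF X RT])
       (simp_all add: bounded_op_iff linear_op_l2)
  also have "\<dots> = ennreal (4 * c\<^sup>2) * hs_sq X"
    by (simp add: ennreal_mult mult.assoc flip: distrib_right)
  also have "\<dots> \<le> ennreal (a\<^sup>2 + b\<^sup>2) * hs_sq X"
    using \<open>0 \<le> a\<close> \<open>0 \<le> b\<close> by (intro mult_right_mono ennreal_leI) (auto simp: c_def max_def power_divide)
  also have "ennreal (a\<^sup>2 + b\<^sup>2) = hs_sq S + hs_sq T"
    using fin_S fin_T by (simp add: a_def b_def hs_norm_def ennreal_plus ennreal_enn2real_esqrt_power2)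
  finally show ?thesis by (simp add: mult.commute)
qed

lemma hs_sq_commutator_le:
  fixes S T X :: "('i \<Rightarrow> complex) \<Rightarrow> ('i \<Rightarrow> complex)"
  assumes S: "bounded_op S" and T: "bounded_op T" and X: "bounded_op X"
    and pos_S: "positive_op S" and pos_T: "positive_op T"
  shows "hs_sq (\<lambda>x i. S (X x) i - X (T x) i) \<le> hs_sq X * (hs_sq S + hs_sq T)"
proof (cases "hs_sq X = 0")
  case True
  then have "X x = (\<lambda>i. 0)" if "x \<in> l2" for x
    using bounded_op_zero_if_basis_zero[OF X _ that] by (simp add: hs_sq_eq_0_iff)
  then have "hs_sq (\<lambda>x i. S (X x) i - X (T x) i) = 0"
    using S T by (simp add: hs_sq_eq_0_iff bounded_op_iff linear_op_zero linear_op_l2 basis_vec_in_l2)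
  then show ?thesis by simp
next
  case False
  show ?thesis
  proof (cases "hs_sq S < top \<and> hs_sq T < top")
    case True
    then show ?thesis using hs_sq_commutator_le_finite[OF S T X pos_S pos_T] by simp
  next
    case False
    then have "hs_sq X * (hs_sq S + hs_sq T) = top"
      using \<open>hs_sq X \<noteq> 0\<close> by (auto simp: not_less top_unique ennreal_mult_eq_top_iff)
    then show ?thesis by simp
  qed
qed

theorem mainTheorem9:
  fixes S T X :: "('i::countable \<Rightarrow> complex) \<Rightarrow> ('i \<Rightarrow> complex)"
  assumes "bounded_op S" and "bounded_op T" and "bounded_op X"
    and "positive_op S" and "positive_op T"
  shows "hs_norm (\<lambda>x i. S (X x) i - X (T x) i)
           \<le> hs_norm X * esqrt ((hs_norm S)\<^sup>2 + (hs_norm T)\<^sup>2)"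
proof -
  have "hs_norm (\<lambda>x i. S (X x) i - X (T x) i) \<le> esqrt (hs_sq X * (hs_sq S + hs_sq T))"
    unfolding hs_norm_def by (rule esqrt_mono[OF hs_sq_commutator_le[OF assms]])
  also have "\<dots> = hs_norm X * esqrt ((hs_norm S)\<^sup>2 + (hs_norm T)\<^sup>2)"
    by (simp add: hs_norm_def esqrt_mult)
  finally show ?thesis .
qed

end
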